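(* Let $G$ be a directed graph with vertices $s,t$, let $k\ge1$, and let $C\in U^k$ satisfy $d_{\mathrm{sum}}(C)=\max_{S\in U^k}d_{\mathrm{sum}}(S)$. Then there exists $C'\in U^k_{\mathrm{lr}}$ such that $d_{\mathrm{sum}}(C')=d_{\mathrm{sum}}(C)$.
   Context: An $s$-$t$ cut of a directed graph $G$ is a set $X\subseteq E(G)$ such that removing $X$ leaves no directed $s$-$t$ path; $\Gamma_G(s,t)$ is the set of $s$-$t$ cuts of minimum cardinality. For $s$-$t$ cuts $X,Y$, write $X\le Y$ if every directed $s$-$t$ path in $G$ meets an edge of $X$ at or before an edge of $Y$. $U^k$ is the set of $k$-tuples $[X_1,\dots,X_k]$ of elements of $\Gamma_G(s,t)$ and $U^k_{\mathrm{lr}}$ the subset of those with $X_i\le X_j$ for all $i<j$. $d_{\mathrm{sum}}(X_1,\dots,X_k)=\sum_{1\le i<j\le k}|X_i\triangle X_j|$ with $\triangle$ the symmetric difference. *)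

theory Defs
  imports Main "Graph_Theory.Digraph" "Graph_Theory.Arc_Walk"
begin

definition st_cut :: "('a,'b) pre_digraph \<Rightarrow> 'a \<Rightarrow> 'a \<Rightarrow> 'b set \<Rightarrow> bool" where
  "st_cut G s t X \<longleftrightarrow> X \<subseteq> arcs G \<and>
     (\<forall>p. pre_digraph.apath G s p t \<longrightarrow> set p \<inter> X \<noteq> {})"

definition min_st_cuts :: "('a,'b) pre_digraph \<Rightarrow> 'a \<Rightarrow> 'a \<Rightarrow> 'b set set" where
  "min_st_cuts G s t = {X. st_cut G s t X \<and> (\<forall>Y. st_cut G s t Y \<longrightarrow> card X \<le> card Y)}"

definition cut_le :: "('a,'b) pre_digraph \<Rightarrow> 'a \<Rightarrow> 'a \<Rightarrow> 'b set \<Rightarrow> 'b set \<Rightarrow> bool" where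
  "cut_le G s t X Y \<longleftrightarrow> (\<forall>p. pre_digraph.apath G s p t \<longrightarrow>
      (\<exists>i < length p. p ! i \<in> X \<and> (\<forall>j < i. p ! j \<notin> Y)))"

definition U :: "('a,'b) pre_digraph \<Rightarrow> 'a \<Rightarrow> 'a \<Rightarrow> nat \<Rightarrow> 'b set list set" where
  "U G s t k = {C. length C = k \<and> set C \<subseteq> min_st_cuts G s t}"

definition U_lr :: "('a,'b) pre_digraph \<Rightarrow> 'a \<Rightarrow> 'a \<Rightarrow> nat \<Rightarrow> 'b set list set" where
  "U_lr G s t k = {C \<in> U G s t k. \<forall>i j. i < j \<and> j < k \<longrightarrow> cut_le G s t (C ! i) (C ! j)}"

definition sym_diff :: "'b set \<Rightarrow> 'b set \<Rightarrow> 'b set" where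
  "sym_diff A B = (A - B) \<union> (B - A)"

definition d_sum :: "'b set list \<Rightarrow> nat" where
  "d_sum C = (\<Sum>j<length C. \<Sum>i<j. card (sym_diff (C ! i) (C ! j)))"

end

theory Submission
  imports Defs
begin

text \<open>
  Every minimum s-t cut is the set of arcs leaving some vertex set containing s but not t
  (the vertices reachable from s without using the cut). Given such sets S_0, ..., S_(k-1), let
  the depth of a vertex be the number of S_j containing it and let T_i consist of the vertices of
  depth at least k - i. The T_i form a chain from s to t, and an arc uv leaves exactly
  depth u - depth v of them, which is at most the number of S_j it leaves. Each T_i still yields
  an s-t cut, of at least minimum size, so comparing total sizes forces equality everywhere: the
  new cuts are minimum, nested (hence ordered left to right), and every arc e lies in as many of
  them as before, say m_e. Since d_sum equals the sum of m_e (k - m_e) over all arcs, it is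
  unchanged.
\<close>

lemma sum_of_bool_lessThan: "(\<Sum>i<k. of_bool (P i)) = card {i. i < (k::nat) \<and> P i}"
proof -
  have restrict: "{..<k} \<inter> {i. P i} = {i. i < k \<and> P i}" by auto
  show ?thesis by (simp flip: restrict)
qed

lemma sum_disagreeing_pairs:
  fixes k :: nat
  shows "(\<Sum>j<k. \<Sum>i<j. of_bool (P i \<noteq> P j))
     = card {i. i < k \<and> P i} * (k - card {i. i < k \<and> P i})"
proof (induction k)
  case 0
  then show ?case by simp
next
  case (Suc k)
  define m where "m = card {i. i < k \<and> P i}"
  have m_le: "m \<le> k"
    unfolding m_def by (rule order.trans[OF card_mono[of "{..<k}"]]) auto
  have "card {i. i < k \<and> \<not> P i} = k - m"
  proof -
    have "{i. i < k \<and> \<not> P i} = {..<k} - {i. i < k \<and> P i}" by auto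
    then show ?thesis
      using card_Diff_subset[of "{i. i < k \<and> P i}" "{..<k}"] by (auto simp: m_def)
  qed
  then have new_pairs: "(\<Sum>i<k. of_bool (P i \<noteq> P k)) = (if P k then k - m else m)"
    by (simp add: sum_of_bool_lessThan m_def)
  have "{i. i < Suc k \<and> P i} = {i. i < k \<and> P i} \<union> (if P k then {k} else {})"
    by (auto simp: less_Suc_eq)
  then have "card {i. i < Suc k \<and> P i} = (if P k then Suc m else m)"
    by (auto simp: m_def)
  moreover have "(\<Sum>j<Suc k. \<Sum>i<j. of_bool (P i \<noteq> P j))
      = m * (k - m) + (\<Sum>i<k. of_bool (P i \<noteq> P k))"
    using Suc.IH by (simp add: m_def)
  ultimately show ?case
    using new_pairs m_le by (cases "P k") (simp_all add: Suc_diff_le)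
qed

definition mem_count :: "'b set list \<Rightarrow> 'b \<Rightarrow> nat" where
  "mem_count D e = card {i. i < length D \<and> e \<in> D ! i}"

lemma card_sym_diff_eq_sum:
  assumes "finite A" "X \<subseteq> A" "Y \<subseteq> A"
  shows "card (sym_diff X Y) = (\<Sum>e\<in>A. of_bool ((e \<in> X) \<noteq> (e \<in> Y)))"
proof -
  have "sym_diff X Y = A \<inter> {e. (e \<in> X) \<noteq> (e \<in> Y)}"
    using assms by (auto simp: sym_diff_def)
  then show ?thesis using assms(1) by simp
qed

lemma d_sum_eq_sum_mem_count:
  assumes "finite A" "\<forall>X \<in> set D. X \<subseteq> A"
  shows "d_sum D = (\<Sum>e\<in>A. mem_count D e * (length D - mem_count D e))"
proof -
  have "d_sum D = (\<Sum>j<length D. \<Sum>i<j. \<Sum>e\<in>A. of_bool ((e \<in> D ! i) \<noteq> (e \<in> D ! j)))"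
    unfolding d_sum_def using assms by (intro sum.cong refl card_sym_diff_eq_sum) auto
  also have "\<dots> = (\<Sum>e\<in>A. \<Sum>j<length D. \<Sum>i<j. of_bool ((e \<in> D ! i) \<noteq> (e \<in> D ! j)))"
    by (subst sum.swap) (rule sum.swap)
  also have "\<dots> = (\<Sum>e\<in>A. mem_count D e * (length D - mem_count D e))"
    by (simp only: sum_disagreeing_pairs mem_count_def)
  finally show ?thesis .
qed

lemma sum_mem_count:
  assumes "finite A" "\<forall>X \<in> set D. X \<subseteq> A"
  shows "(\<Sum>e\<in>A. mem_count D e) = (\<Sum>i<length D. card (D ! i))"
proof -
  have "(\<Sum>e\<in>A. mem_count D e) = (\<Sum>e\<in>A. \<Sum>i<length D. of_bool (e \<in> D ! i))"
    by (simp only: mem_count_def sum_of_bool_lessThan)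
  also have "\<dots> = (\<Sum>i<length D. \<Sum>e\<in>A. of_bool (e \<in> D ! i))"
    by (rule sum.swap)
  also have "\<dots> = (\<Sum>i<length D. card (D ! i))"
  proof (rule sum.cong[OF refl])
    fix i assume "i \<in> {..<length D}"
    then have "A \<inter> {e. e \<in> D ! i} = D ! i" using assms(2) by auto
    then show "(\<Sum>e\<in>A. of_bool (e \<in> D ! i)) = card (D ! i)" using assms(1) by simp
  qed
  finally show ?thesis .
qed

lemma mem_count_and_card_eq:
  assumes "finite A" "length D' = length D" "\<forall>X \<in> set D. X \<subseteq> A" "\<forall>X \<in> set D'. X \<subseteq> A"
    and count_le: "\<forall>e \<in> A. mem_count D' e \<le> mem_count D e"
    and card_le: "\<forall>i < length D. card (D ! i) \<le> card (D' ! i)"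
  shows "\<forall>e \<in> A. mem_count D' e = mem_count D e"
    and "\<forall>i < length D. card (D' ! i) = card (D ! i)"
proof -
  have "(\<Sum>e\<in>A. mem_count D' e) \<le> (\<Sum>e\<in>A. mem_count D e)"
    using count_le by (intro sum_mono) auto
  moreover have "(\<Sum>i<length D. card (D ! i)) \<le> (\<Sum>i<length D. card (D' ! i))"
    using card_le by (intro sum_mono) auto
  moreover have "(\<Sum>e\<in>A. mem_count D e) = (\<Sum>i<length D. card (D ! i))"
    and "(\<Sum>e\<in>A. mem_count D' e) = (\<Sum>i<length D. card (D' ! i))"
    using sum_mem_count[OF assms(1,3)] sum_mem_count[OF assms(1,4)] assms(2) by simp_all
  ultimately have count_sum: "(\<Sum>e\<in>A. mem_count D' e) = (\<Sum>e\<in>A. mem_count D e)"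
    and card_sum: "(\<Sum>i<length D. card (D ! i)) = (\<Sum>i<length D. card (D' ! i))"
    by linarith+
  show "\<forall>e \<in> A. mem_count D' e = mem_count D e"
    using sum_mono_inv[OF count_sum] count_le assms(1) by blast
  show "\<forall>i < length D. card (D' ! i) = card (D ! i)"
    using sum_mono_inv[OF card_sum] card_le by (simp add: eq_commute)
qed

definition leaving_arcs :: "('a,'b) pre_digraph \<Rightarrow> 'a set \<Rightarrow> 'b set" where
  "leaving_arcs G T = {e \<in> arcs G. tail G e \<in> T \<and> head G e \<notin> T}"

lemma (in wf_digraph) awalk_first_exit:
  assumes "awalk u p v" "u \<in> T" "v \<notin> T"
  shows "\<exists>i < length p. p ! i \<in> leaving_arcs G T \<and> (\<forall>j < i. head G (p ! j) \<in> T)"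
  using assms
proof (induction p arbitrary: u)
  case Nil
  then show ?case by (auto simp: awalk_def)
next
  case (Cons e es)
  then have e: "e \<in> arcs G" "u = tail G e" "awalk (head G e) es v"
    by (auto simp: awalk_Cons_iff)
  show ?case
  proof (cases "head G e \<in> T")
    case False
    then show ?thesis using e Cons.prems(2) by (intro exI[of _ 0]) (auto simp: leaving_arcs_def)
  next
    case True
    from Cons.IH[OF e(3) True Cons.prems(3)] obtain i where
      "i < length es" "es ! i \<in> leaving_arcs G T" "\<forall>j < i. head G (es ! j) \<in> T"
      by blast
    then show ?thesis
      using True by (intro exI[of _ "Suc i"]) (auto simp: less_Suc_eq_0_disj)
  qed
qed

lemma (in wf_digraph) st_cut_leaving_arcs:
  assumes "s \<in> T" "t \<notin> T"
  shows "st_cut G s t (leaving_arcs G T)"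
  unfolding st_cut_def
proof safe
  show "e \<in> arcs G" if "e \<in> leaving_arcs G T" for e
    using that by (simp add: leaving_arcs_def)
next
  fix p assume "apath s p t" "set p \<inter> leaving_arcs G T = {}"
  moreover obtain i where "i < length p" "p ! i \<in> leaving_arcs G T"
    using awalk_first_exit[OF awalkI_apath[OF \<open>apath s p t\<close>] assms] by blast
  ultimately show False by (auto dest: nth_mem)
qed

lemma (in wf_digraph) cut_le_leaving_arcs:
  assumes "s \<in> T" "t \<notin> T" "T \<subseteq> T'"
  shows "cut_le G s t (leaving_arcs G T) (leaving_arcs G T')"
  unfolding cut_le_def
proof safe
  fix p assume "apath s p t"
  then obtain i where "i < length p" "p ! i \<in> leaving_arcs G T" "\<forall>j < i. head G (p ! j) \<in> T"
    using awalk_first_exit[OF awalkI_apath assms(1,2)] by blast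
  then show "\<exists>i < length p. p ! i \<in> leaving_arcs G T \<and> (\<forall>j < i. p ! j \<notin> leaving_arcs G T')"
    using assms(3) by (auto simp: leaving_arcs_def)
qed

lemma (in fin_digraph) min_st_cut_eq_leaving_arcs:
  assumes "X \<in> min_st_cuts G s t" "s \<in> verts G"
  obtains R where "s \<in> R" "t \<notin> R" "X = leaving_arcs G R"
proof -
  define R where "R = {v. \<exists>p. awalk s p v \<and> set p \<inter> X = {}}"
  have cut: "st_cut G s t X" and minimal: "\<And>Y. st_cut G s t Y \<Longrightarrow> card X \<le> card Y"
    using assms(1) by (auto simp: min_st_cuts_def)
  have "s \<in> R"
    unfolding R_def using assms(2) by (auto simp: awalk_Nil_iff intro: exI[of _ "[]"])
  moreover have "t \<notin> R"
  proof
    assume "t \<in> R"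
    then obtain p where p: "awalk s p t" "set p \<inter> X = {}" by (auto simp: R_def)
    then have "apath s (awalk_to_apath p) t" "set (awalk_to_apath p) \<inter> X = {}"
      using apath_awalk_to_apath awalk_to_apath_subset by blast+
    then show False using cut by (auto simp: st_cut_def)
  qed
  moreover have "leaving_arcs G R \<subseteq> X"
  proof
    fix e assume e: "e \<in> leaving_arcs G R"
    then obtain p where p: "awalk s p (tail G e)" "set p \<inter> X = {}"
      by (auto simp: leaving_arcs_def R_def)
    have "awalk s (p @ [e]) (head G e)"
      using e p(1) by (auto simp: leaving_arcs_def intro: awalk_appendI arc_implies_awalk)
    show "e \<in> X"
    proof (rule ccontr)
      assume "e \<notin> X"
      with p(2) have "set (p @ [e]) \<inter> X = {}" by auto
      with \<open>awalk s (p @ [e]) (head G e)\<close> have "head G e \<in> R" unfolding R_def by blast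
      with e show False by (simp add: leaving_arcs_def)
    qed
  qed
  moreover have "finite X"
    using cut finite_arcs by (auto simp: st_cut_def intro: finite_subset)
  ultimately have "leaving_arcs G R = X"
    using minimal[OF st_cut_leaving_arcs] card_seteq by blast
  with \<open>s \<in> R\<close> \<open>t \<notin> R\<close> show ?thesis using that by blast
qed

lemma subset_arcs_if_in_U:
  assumes "C \<in> U G s t k" "X \<in> set C"
  shows "X \<subseteq> arcs G"
  using assms unfolding U_def min_st_cuts_def st_cut_def by blast

definition level_set :: "(nat \<Rightarrow> 'a set) \<Rightarrow> nat \<Rightarrow> nat \<Rightarrow> 'a set" where
  "level_set S k i = {v. k - i \<le> card {j. j < k \<and> v \<in> S j}}"

lemma level_set_mono: "i \<le> i' \<Longrightarrow> level_set S k i \<subseteq> level_set S k i'"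
  by (auto simp: level_set_def)

lemma in_level_set_if_in_all:
  assumes "\<forall>j<k. v \<in> S j"
  shows "v \<in> level_set S k i"
proof -
  have "{j. j < k \<and> v \<in> S j} = {..<k}" using assms by auto
  then show ?thesis by (simp add: level_set_def)
qed

lemma not_in_level_set_if_in_none:
  assumes "\<forall>j<k. v \<notin> S j" "i < k"
  shows "v \<notin> level_set S k i"
proof -
  have none: "{j. j < k \<and> v \<in> S j} = {}" using assms(1) by auto
  show ?thesis using assms(2) by (simp add: level_set_def none)
qed

lemma card_leaving_arcs_level_sets_le:
  assumes "e \<in> arcs G"
  shows "card {i. i < k \<and> e \<in> leaving_arcs G (level_set S k i)}
           \<le> card {j. j < k \<and> e \<in> leaving_arcs G (S j)}"
proof -
  define depth where "depth v = card {j. j < k \<and> v \<in> S j}" for v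
  have depth_le: "depth v \<le> k" for v
    unfolding depth_def by (rule order.trans[OF card_mono[of "{..<k}"]]) auto
  have "{i. i < k \<and> e \<in> leaving_arcs G (level_set S k i)}
          = {k - depth (tail G e)..<k - depth (head G e)}"
    using assms depth_le[of "tail G e"] depth_le[of "head G e"]
    by (auto simp: leaving_arcs_def level_set_def depth_def)
  then have "card {i. i < k \<and> e \<in> leaving_arcs G (level_set S k i)}
               = depth (tail G e) - depth (head G e)"
    using depth_le[of "tail G e"] depth_le[of "head G e"] by simp
  also have "\<dots> \<le> card {j. j < k \<and> e \<in> leaving_arcs G (S j)}"
  proof -
    have "{j. j < k \<and> tail G e \<in> S j}
            \<subseteq> {j. j < k \<and> e \<in> leaving_arcs G (S j)} \<union> {j. j < k \<and> head G e \<in> S j}"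
      using assms by (auto simp: leaving_arcs_def)
    then have "depth (tail G e)
        \<le> card ({j. j < k \<and> e \<in> leaving_arcs G (S j)} \<union> {j. j < k \<and> head G e \<in> S j})"
      unfolding depth_def by (rule card_mono[rotated]) auto
    also have "\<dots> \<le> card {j. j < k \<and> e \<in> leaving_arcs G (S j)} + depth (head G e)"
      unfolding depth_def by (rule card_Un_le)
    finally show ?thesis by simp
  qed
  finally show ?thesis .
qed

lemma (in fin_digraph) U_eq_leaving_arcs:
  assumes "s \<in> verts G" "C \<in> U G s t k"
  obtains S where "\<forall>j<k. s \<in> S j \<and> t \<notin> S j \<and> C ! j = leaving_arcs G (S j)"
proof -
  have "\<forall>j \<in> {..<k}. \<exists>R. s \<in> R \<and> t \<notin> R \<and> C ! j = leaving_arcs G R"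
  proof
    fix j assume "j \<in> {..<k}"
    then have "C ! j \<in> min_st_cuts G s t" using assms(2) by (auto simp: U_def)
    then obtain R where "s \<in> R" "t \<notin> R" "C ! j = leaving_arcs G R"
      using assms(1) by (rule min_st_cut_eq_leaving_arcs)
    then show "\<exists>R. s \<in> R \<and> t \<notin> R \<and> C ! j = leaving_arcs G R" by blast
  qed
  from bchoice[OF this] show ?thesis using that by auto
qed

lemma (in fin_digraph) uncross_min_st_cuts:
  assumes "s \<in> verts G" "C \<in> U G s t k"
  obtains C' where "C' \<in> U_lr G s t k" "\<forall>e \<in> arcs G. mem_count C' e = mem_count C e"
proof -
  have len_C: "length C = k" and min_C: "\<forall>j<k. C ! j \<in> min_st_cuts G s t"
    using assms(2) by (auto simp: U_def)
  obtain S where S: "\<forall>j<k. s \<in> S j \<and> t \<notin> S j \<and> C ! j = leaving_arcs G (S j)"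
    using U_eq_leaving_arcs[OF assms] .
  have s_in: "s \<in> level_set S k i" for i
    using S by (simp add: in_level_set_if_in_all)
  have t_notin: "t \<notin> level_set S k i" if "i < k" for i
    using S that by (simp add: not_in_level_set_if_in_none)
  define C' where "C' = map (\<lambda>i. leaving_arcs G (level_set S k i)) [0..<k]"
  have cuts: "\<forall>i<k. st_cut G s t (C' ! i)"
    using st_cut_leaving_arcs s_in t_notin by (simp add: C'_def)
  have ordered: "\<forall>i j. i < j \<and> j < k \<longrightarrow> cut_le G s t (C' ! i) (C' ! j)"
    using cut_le_leaving_arcs[OF s_in t_notin level_set_mono] by (simp add: C'_def)
  have count_le: "\<forall>e \<in> arcs G. mem_count C' e \<le> mem_count C e"
  proof
    fix e assume "e \<in> arcs G"
    have "mem_count C' e = card {i. i < k \<and> e \<in> leaving_arcs G (level_set S k i)}"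
      unfolding mem_count_def C'_def by (rule arg_cong[where f = card]) auto
    moreover have "mem_count C e = card {j. j < k \<and> e \<in> leaving_arcs G (S j)}"
      unfolding mem_count_def using len_C S by (intro arg_cong[where f = card]) auto
    ultimately show "mem_count C' e \<le> mem_count C e"
      using card_leaving_arcs_level_sets_le[OF \<open>e \<in> arcs G\<close>] by simp
  qed
  have card_le: "\<forall>i<k. card (C ! i) \<le> card (C' ! i)"
    using min_C cuts by (auto simp: min_st_cuts_def)
  have "\<forall>X \<in> set C'. X \<subseteq> arcs G"
    by (auto simp: C'_def leaving_arcs_def)
  then have "\<forall>i<k. card (C' ! i) = card (C ! i)"
    and "\<forall>e \<in> arcs G. mem_count C' e = mem_count C e"
    using mem_count_and_card_eq[OF finite_arcs _ _ _ count_le] card_le len_C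
      subset_arcs_if_in_U[OF assms(2)] by (auto simp: C'_def)
  moreover from this(1) have "\<forall>i<k. C' ! i \<in> min_st_cuts G s t"
    using min_C cuts by (auto simp: min_st_cuts_def)
  then have "C' \<in> U_lr G s t k"
    using ordered by (auto simp: U_lr_def U_def C'_def in_set_conv_nth)
  ultimately show ?thesis using that by blast
qed

theorem corollary1:
  fixes G :: "('a,'b) pre_digraph" and s t :: 'a and k :: nat and C :: "'b set list"
  assumes "fin_digraph G"
    and "s \<in> verts G" and "t \<in> verts G"
    and "k \<ge> 1"
    and "C \<in> U G s t k"
    and "\<forall>S \<in> U G s t k. d_sum S \<le> d_sum C"
  shows "\<exists>C' \<in> U_lr G s t k. d_sum C' = d_sum C"
proof -
  interpret fin_digraph G by fact
  obtain C' where C': "C' \<in> U_lr G s t k" "\<forall>e \<in> arcs G. mem_count C' e = mem_count C e"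
    using uncross_min_st_cuts assms(2,5) by blast
  have d_sum_U: "d_sum D = (\<Sum>e\<in>arcs G. mem_count D e * (k - mem_count D e))"
    if "D \<in> U G s t k" for D
    using d_sum_eq_sum_mem_count[OF finite_arcs] subset_arcs_if_in_U[OF that] that
    by (simp add: U_def)
  have "C' \<in> U G s t k" using C'(1) by (simp add: U_lr_def)
  then have "d_sum C' = d_sum C"
    using d_sum_U assms(5) C'(2) by simp
  then show ?thesis using C'(1) by blast
qed

end
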